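(* Let $s_1,s_2\ge0$, $s=(s_1,s_2)$. For a probability vector $q$ on $\hat{\mathcal X}$, define: - $A(x,\hat x,s)=\exp\{-s_1d(x,\hat x)-s_2g(p,q_{Q[q]},\hat x)\}$, with $g(p,r,\hat x)=f\big(\tfrac{p(\hat x)}{r(\hat x)}\big)-\tfrac{p(\hat x)}{r(\hat x)}\partial f\big(\tfrac{p(\hat x)}{r(\hat x)}\big)$; - $Q[q](\hat x|x)=q(\hat x)A(x,\hat x,s)/\sum_{i}q(i)A(x,i,s)$, which is defined implicitly, since $A$ depends on the output marginal $q_{Q[q]}$ of $Q[q]$. Let $q^*$ achieve the minimum below, and set $$D_s=\sum_{x,\hat x}p(x)\frac{q^*(\hat x)A(x,\hat x,s)}{\sum_i q^*(i)A(x,i,s)}d(x,\hat x),\qquad P_s=D_f(p\|q_{Q[q^*]}).$$ Then $$R(D_s,P_s)=-s_1D_s-s_2P_s+\min_q\Big[s_2\sum_{\hat x}p(\hat x)\,\partial f\Big(\frac{p(\hat x)}{q_{Q[q]}(\hat x)}\Big)-\sum_x p(x)\log\Big(\sum_{\hat x}q(\hat x)A(x,\hat x,s)\Big)\Big].$$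
   Context: Finite alphabets $\mathcal X=\hat{\mathcal X}$ (same finite set). The source distribution is $p$ on $\mathcal X$, and $d:\mathcal X\times\hat{\mathcal X}\to[0,\infty)$ is a distortion. $f:(0,\infty)\to\mathbb R$ is convex with $f(1)=0$, and $D_f(p\|q)=\sum_x q(x)f(p(x)/q(x))$. $\partial f(t)$ denotes a subgradient of $f$ at $t$. For a transition matrix $Q$, $q_Q(\hat x)=\sum_xp(x)Q(\hat x|x)$ is the output marginal, and $I(p,Q)=\sum_{x,\hat x}p(x)Q(\hat x|x)\log\frac{Q(\hat x|x)}{q_Q(\hat x)}$. The rate-distortion-perception function is $R(D,P)=\min_Q I(p,Q)$ subject to $\sum_{x,\hat x}p(x)Q(\hat x|x)d(x,\hat x)\le D$ and $D_f(p\|q_Q)\le P$, for $D,P>0$. *)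

theory Defs
  imports "HOL-Analysis.Analysis"
begin

text \<open>Alphabet: a finite type 'a (X = hat X). A channel Q is written Q x xh = Q(xh|x).
  The distributions are functions 'a \<Rightarrow> real.\<close>

definition prob_vec :: "('a::finite \<Rightarrow> real) \<Rightarrow> bool" where
  "prob_vec q \<longleftrightarrow> (\<forall>x. q x \<ge> 0) \<and> (\<Sum>x\<in>UNIV. q x) = 1"

definition channel :: "('a::finite \<Rightarrow> 'a \<Rightarrow> real) \<Rightarrow> bool" where
  "channel Q \<longleftrightarrow> (\<forall>x xh. Q x xh \<ge> 0) \<and> (\<forall>x. (\<Sum>xh\<in>UNIV. Q x xh) = 1)"

definition out_marg :: "('a::finite \<Rightarrow> real) \<Rightarrow> ('a \<Rightarrow> 'a \<Rightarrow> real) \<Rightarrow> 'a \<Rightarrow> real" where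
  "out_marg p Q xh = (\<Sum>x\<in>UNIV. p x * Q x xh)"

definition mutual_info :: "('a::finite \<Rightarrow> real) \<Rightarrow> ('a \<Rightarrow> 'a \<Rightarrow> real) \<Rightarrow> real" where
  "mutual_info p Q = (\<Sum>x\<in>UNIV. \<Sum>xh\<in>UNIV. p x * Q x xh * ln (Q x xh / out_marg p Q xh))"

definition f_div :: "(real \<Rightarrow> real) \<Rightarrow> ('a::finite \<Rightarrow> real) \<Rightarrow> ('a \<Rightarrow> real) \<Rightarrow> real" where
  "f_div f p q = (\<Sum>x\<in>UNIV. q x * f (p x / q x))"

definition exp_dist :: "('a::finite \<Rightarrow> real) \<Rightarrow> ('a \<Rightarrow> 'a \<Rightarrow> real) \<Rightarrow> ('a \<Rightarrow> 'a \<Rightarrow> real) \<Rightarrow> real" where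
  "exp_dist p Q d = (\<Sum>x\<in>UNIV. \<Sum>xh\<in>UNIV. p x * Q x xh * d x xh)"

text \<open>Since f is only defined on (0,\<infinity>),
  D_f(p||q_Q) is only defined when q_Q has full support; this is part of the constraint.\<close>
definition rdp :: "(real \<Rightarrow> real) \<Rightarrow> ('a::finite \<Rightarrow> real) \<Rightarrow> ('a \<Rightarrow> 'a \<Rightarrow> real) \<Rightarrow> real \<Rightarrow> real \<Rightarrow> real" where
  "rdp f p d D P = Inf {mutual_info p Q | Q. channel Q \<and> (\<forall>xh. out_marg p Q xh > 0)
      \<and> exp_dist p Q d \<le> D \<and> f_div f p (out_marg p Q) \<le> P}"

text \<open>g(p,r,xh) = f(p(xh)/r(xh)) - p(xh)/r(xh) * \<partial>f(p(xh)/r(xh)), with df a subgradient selection.\<close>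
definition gfun :: "(real \<Rightarrow> real) \<Rightarrow> (real \<Rightarrow> real) \<Rightarrow> ('a \<Rightarrow> real) \<Rightarrow> ('a \<Rightarrow> real) \<Rightarrow> 'a \<Rightarrow> real" where
  "gfun f df p r xh = f (p xh / r xh) - p xh / r xh * df (p xh / r xh)"

definition Afun :: "(real \<Rightarrow> real) \<Rightarrow> (real \<Rightarrow> real) \<Rightarrow> ('a \<Rightarrow> 'a \<Rightarrow> real) \<Rightarrow> ('a \<Rightarrow> real)
    \<Rightarrow> real \<Rightarrow> real \<Rightarrow> ('a \<Rightarrow> real) \<Rightarrow> 'a \<Rightarrow> 'a \<Rightarrow> real" where
  "Afun f df d p s1 s2 r x xh = exp (- s1 * d x xh - s2 * gfun f df p r xh)"

definition is_Qq :: "(real \<Rightarrow> real) \<Rightarrow> (real \<Rightarrow> real) \<Rightarrow> ('a::finite \<Rightarrow> 'a \<Rightarrow> real) \<Rightarrow> ('a \<Rightarrow> real)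
    \<Rightarrow> real \<Rightarrow> real \<Rightarrow> ('a \<Rightarrow> real) \<Rightarrow> ('a \<Rightarrow> 'a \<Rightarrow> real) \<Rightarrow> bool" where
  "is_Qq f df d p s1 s2 q Q \<longleftrightarrow> (\<forall>x xh. Q x xh =
      q xh * Afun f df d p s1 s2 (out_marg p Q) x xh
      / (\<Sum>i\<in>UNIV. q i * Afun f df d p s1 s2 (out_marg p Q) x i))"

text \<open>The objective minimised over q (given a selection Qm of Q[q]).\<close>
definition objective :: "(real \<Rightarrow> real) \<Rightarrow> (real \<Rightarrow> real) \<Rightarrow> ('a::finite \<Rightarrow> 'a \<Rightarrow> real) \<Rightarrow> ('a \<Rightarrow> real)
    \<Rightarrow> real \<Rightarrow> real \<Rightarrow> (('a \<Rightarrow> real) \<Rightarrow> ('a \<Rightarrow> 'a \<Rightarrow> real)) \<Rightarrow> ('a \<Rightarrow> real) \<Rightarrow> real" where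
  "objective f df d p s1 s2 Qm q =
     s2 * (\<Sum>xh\<in>UNIV. p xh * df (p xh / out_marg p (Qm q) xh))
     - (\<Sum>x\<in>UNIV. p x * ln (\<Sum>xh\<in>UNIV. q xh * Afun f df d p s1 s2 (out_marg p (Qm q)) x xh))"

end

theory Submission
  imports Defs
begin

text \<open>
  Write \<open>Q\<^sup>*\<close> for \<open>Q[q\<^sup>*]\<close> and \<open>L\<close> for the right-hand side. Two
  bounds meet. For every channel \<open>W\<close> and every \<open>q\<close>, the Gibbs variational inequality
  applied row by row, together with the tangent-line inequality of the convex \<open>f\<close>, give
  \<open>objective q \<le> \<Sum> p W ln (W/q) + s\<^sub>1 E\<^sub>W d + s\<^sub>2 D\<^sub>f(p\<parallel>q\<^sub>W)\<close>, with equality when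
  \<open>W = Q[q]\<close>. Taking \<open>q = q\<^sub>W\<close> and using the minimality of \<open>q\<^sup>*\<close>, every \<open>W\<close> feasible for
  \<open>(D\<^sub>s, P\<^sub>s)\<close> has \<open>I(p,W) \<ge> L\<close>. The equality case at \<open>q\<^sup>*\<close> gives
  \<open>I(p,Q\<^sup>*) = L - D(q\<^sub>Q\<^sub>*\<parallel>q\<^sup>*) \<le> L\<close>, and \<open>Q\<^sup>*\<close> is itself feasible, so \<open>L\<close> is the minimum.
  Of the hypotheses on \<open>f\<close> and \<open>d\<close> only the subgradient inequality is needed.
\<close>

definition cross_info :: "('a::finite \<Rightarrow> real) \<Rightarrow> ('a \<Rightarrow> 'a \<Rightarrow> real) \<Rightarrow> ('a \<Rightarrow> real) \<Rightarrow> real" where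
  "cross_info p W q = (\<Sum>x\<in>UNIV. \<Sum>xh\<in>UNIV. p x * W x xh * ln (W x xh / q xh))"

lemma cross_info_out_marg: "cross_info p W (out_marg p W) = mutual_info p W"
  by (simp add: cross_info_def mutual_info_def)

lemma mult_ln_div_ge:
  fixes a b S :: real
  assumes "a \<ge> 0" "b > 0" "S > 0"
  shows "a - b / S - a * ln S \<le> a * ln (a / b)"
proof (cases "a = 0")
  case False
  with assms have a: "a > 0" by simp
  have "ln (b / (a * S)) \<le> b / (a * S) - 1"
    using a assms by (intro ln_le_minus_one) simp
  moreover have "ln (b / (a * S)) = - ln (a / b) - ln S"
    using a assms by (simp add: ln_div ln_mult)
  ultimately have "a * (1 - b / (a * S) - ln S) \<le> a * ln (a / b)"
    using a by (intro mult_left_mono) auto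
  moreover have "a * (1 - b / (a * S) - ln S) = a - b / S - a * ln S"
    using a assms by (simp add: field_simps)
  ultimately show ?thesis
    by simp
qed (use assms in simp)

lemma gibbs_inequality:
  fixes a b :: "'a::finite \<Rightarrow> real"
  assumes "\<forall>x. a x \<ge> 0" "(\<Sum>x\<in>UNIV. a x) = 1" "\<forall>x. b x > 0"
  shows "- ln (\<Sum>x\<in>UNIV. b x) \<le> (\<Sum>x\<in>UNIV. a x * ln (a x / b x))"
proof -
  define S where "S = (\<Sum>x\<in>UNIV. b x)"
  have S: "S > 0"
    unfolding S_def using assms(3) by (simp add: sum_pos)
  have "- ln S = (\<Sum>x\<in>UNIV. a x - b x / S - a x * ln S)"
    using assms(2) S
    by (simp add: sum_subtractf sum_divide_distrib[symmetric] sum_distrib_right[symmetric] S_def)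
  also have "\<dots> \<le> (\<Sum>x\<in>UNIV. a x * ln (a x / b x))"
    using assms S by (intro sum_mono mult_ln_div_ge) auto
  finally show ?thesis
    by (simp add: S_def)
qed

lemma gibbs_equality:
  fixes b :: "'a::finite \<Rightarrow> real"
  assumes "\<forall>x. b x > 0"
  defines "S \<equiv> \<Sum>x\<in>UNIV. b x"
  shows "(\<Sum>x\<in>UNIV. b x / S * ln (b x / S / b x)) = - ln S"
proof -
  have S: "S > 0"
    unfolding S_def using assms by (simp add: sum_pos)
  have "b x / S * ln (b x / S / b x) = - ln S * (b x / S)" for x
    using assms S by (simp add: ln_div less_imp_neq[symmetric])
  then have "(\<Sum>x\<in>UNIV. b x / S * ln (b x / S / b x)) = - ln S * ((\<Sum>x\<in>UNIV. b x) / S)"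
    by (simp only: sum_distrib_left sum_divide_distrib)
  then show ?thesis
    using S by (simp add: S_def)
qed

lemma perspective_tangent_le:
  fixes f df :: "real \<Rightarrow> real"
  assumes df_subgrad: "\<forall>t>0. \<forall>u>0. f u \<ge> f t + df t * (u - t)"
    and "t > 0" "a > 0" "w > 0"
  shows "w * (f t - t * df t) + a * df t \<le> w * f (a / w)"
proof -
  have "w * (f t + df t * (a / w - t)) \<le> w * f (a / w)"
    using df_subgrad assms by (intro mult_left_mono) auto
  moreover have "w * (f t + df t * (a / w - t)) = w * (f t - t * df t) + a * df t"
    using assms by (simp add: field_simps)
  ultimately show ?thesis
    by simp
qed

lemma sum_df_add_gfun_le_f_div:
  fixes p r w :: "'a::finite \<Rightarrow> real"
  assumes "\<forall>t>0. \<forall>u>0. f u \<ge> f t + df t * (u - t)"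
    and "\<forall>x. p x > 0" "\<forall>x. r x > 0" "\<forall>x. w x > 0"
  shows "(\<Sum>x\<in>UNIV. p x * df (p x / r x)) + (\<Sum>x\<in>UNIV. w x * gfun f df p r x) \<le> f_div f p w"
proof -
  have "p x * df (p x / r x) + w x * gfun f df p r x \<le> w x * f (p x / w x)" for x
    using perspective_tangent_le[OF assms(1), of "p x / r x" "p x" "w x"] assms(2-4)
    by (simp add: gfun_def add.commute)
  then show ?thesis
    unfolding f_div_def sum.distrib[symmetric] by (intro sum_mono)
qed

lemma sum_df_add_gfun_eq_f_div:
  fixes p r :: "'a::finite \<Rightarrow> real"
  assumes "\<forall>x. r x > 0"
  shows "(\<Sum>x\<in>UNIV. p x * df (p x / r x)) + (\<Sum>x\<in>UNIV. r x * gfun f df p r x) = f_div f p r"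
  unfolding f_div_def sum.distrib[symmetric]
  using assms by (intro sum.cong) (auto simp: gfun_def field_simps less_imp_neq[symmetric])

lemma sum_out_marg_mult:
  "(\<Sum>x\<in>UNIV. \<Sum>xh\<in>UNIV. p x * Q x xh * h xh) = (\<Sum>xh\<in>UNIV. out_marg p Q xh * h xh)"
  by (simp add: out_marg_def sum_distrib_right) (rule sum.swap)

lemma prob_vec_out_marg:
  assumes "prob_vec p" "channel Q"
  shows "prob_vec (out_marg p Q)"
proof -
  have "(\<Sum>xh\<in>UNIV. out_marg p Q xh) = (\<Sum>x\<in>UNIV. p x * (\<Sum>xh\<in>UNIV. Q x xh))"
    unfolding out_marg_def by (simp add: sum_distrib_left) (rule sum.swap)
  then show ?thesis
    using assms by (simp add: prob_vec_def channel_def out_marg_def sum_nonneg)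
qed

lemma out_marg_pos:
  assumes "\<forall>x. p x > 0" "\<forall>x. Q x xh > 0"
  shows "out_marg p Q xh > 0"
  using assms by (simp add: out_marg_def sum_pos)

lemma is_Qq_pos:
  assumes "\<forall>xh. q xh > 0" "is_Qq f df d p s1 s2 q Q"
  shows "Q x xh > 0"
  using assms by (simp add: is_Qq_def Afun_def sum_pos)

lemma is_Qq_channel:
  assumes "\<forall>xh. q xh > 0" "is_Qq f df d p s1 s2 q Q"
  shows "channel Q"
proof -
  let ?A = "Afun f df d p s1 s2 (out_marg p Q)"
  have Q_eq: "Q x xh = q xh * ?A x xh / (\<Sum>i\<in>UNIV. q i * ?A x i)" for x xh
    using assms(2) unfolding is_Qq_def by blast
  have "(\<Sum>xh\<in>UNIV. Q x xh) = (\<Sum>xh\<in>UNIV. q xh * ?A x xh) / (\<Sum>i\<in>UNIV. q i * ?A x i)" for x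
    by (simp only: Q_eq sum_divide_distrib)
  moreover have "(\<Sum>i\<in>UNIV. q i * ?A x i) \<noteq> 0" for x
    using assms(1) by (simp add: Afun_def sum_pos less_imp_neq[symmetric])
  ultimately show ?thesis
    using is_Qq_pos[OF assms] by (simp add: channel_def less_imp_le)
qed

lemma exp_dist_is_Qq:
  assumes "is_Qq f df d p s1 s2 q Q"
  shows "exp_dist p Q d = (\<Sum>x\<in>UNIV. \<Sum>xh\<in>UNIV. p x *
      (q xh * Afun f df d p s1 s2 (out_marg p Q) x xh
        / (\<Sum>i\<in>UNIV. q i * Afun f df d p s1 s2 (out_marg p Q) x i)) * d x xh)"
  using assms by (simp add: is_Qq_def exp_dist_def)

lemma expected_ln_div_tilted:
  assumes "\<forall>x xh. W x xh \<ge> 0" "\<forall>xh. q xh > 0"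
  shows "(\<Sum>x\<in>UNIV. p x * (\<Sum>xh\<in>UNIV. W x xh * ln (W x xh / (q xh * Afun f df d p s1 s2 r x xh))))
    = cross_info p W q + s1 * exp_dist p W d + s2 * (\<Sum>xh\<in>UNIV. out_marg p W xh * gfun f df p r xh)"
proof -
  have "W x xh * ln (W x xh / (q xh * Afun f df d p s1 s2 r x xh))
      = W x xh * ln (W x xh / q xh) + s1 * (W x xh * d x xh) + s2 * (W x xh * gfun f df p r xh)"
    for x xh
  proof (cases "W x xh = 0")
    case False
    with assms have "W x xh > 0" "q xh > 0"
      by (auto simp: less_le)
    then show ?thesis
      by (simp add: Afun_def ln_div ln_mult algebra_simps)
  qed simp
  then show ?thesis
    by (simp add: cross_info_def exp_dist_def sum_out_marg_mult[symmetric]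
        sum.distrib sum_distrib_left algebra_simps)
qed

lemma objective_le:
  fixes p :: "'a::finite \<Rightarrow> real"
  assumes p_pos: "\<forall>x. p x > 0"
    and df_subgrad: "\<forall>t>0. \<forall>u>0. f u \<ge> f t + df t * (u - t)"
    and s2: "s2 \<ge> 0"
    and q: "\<forall>xh. q xh > 0" and Qm: "is_Qq f df d p s1 s2 q (Qm q)"
    and W: "channel W" "\<forall>xh. out_marg p W xh > 0"
  shows "objective f df d p s1 s2 Qm q
    \<le> cross_info p W q + s1 * exp_dist p W d + s2 * f_div f p (out_marg p W)"
proof -
  define r where "r = out_marg p (Qm q)"
  define A where "A = Afun f df d p s1 s2 r"
  have r: "\<forall>xh. r xh > 0"
    unfolding r_def using p_pos is_Qq_pos[OF q Qm] by (simp add: out_marg_pos)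
  have W_row: "\<forall>xh. W x xh \<ge> 0" "(\<Sum>xh\<in>UNIV. W x xh) = 1" for x
    using W(1) by (auto simp: channel_def)
  have "objective f df d p s1 s2 Qm q
      = s2 * (\<Sum>xh\<in>UNIV. p xh * df (p xh / r xh)) + (\<Sum>x\<in>UNIV. p x * - ln (\<Sum>xh\<in>UNIV. q xh * A x xh))"
    by (simp add: objective_def r_def A_def sum_negf)
  also have "\<dots> \<le> s2 * (\<Sum>xh\<in>UNIV. p xh * df (p xh / r xh))
      + (\<Sum>x\<in>UNIV. p x * (\<Sum>xh\<in>UNIV. W x xh * ln (W x xh / (q xh * A x xh))))"
    using gibbs_inequality[OF W_row] q p_pos
    by (intro add_left_mono sum_mono mult_left_mono) (auto simp: A_def Afun_def less_imp_le)
  also have "\<dots> = cross_info p W q + s1 * exp_dist p W d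
      + s2 * ((\<Sum>xh\<in>UNIV. p xh * df (p xh / r xh)) + (\<Sum>xh\<in>UNIV. out_marg p W xh * gfun f df p r xh))"
    using W_row(1) q by (simp add: A_def expected_ln_div_tilted algebra_simps)
  also have "\<dots> \<le> cross_info p W q + s1 * exp_dist p W d + s2 * f_div f p (out_marg p W)"
    using sum_df_add_gfun_le_f_div[OF df_subgrad p_pos r W(2)] s2
    by (intro add_left_mono mult_left_mono)
  finally show ?thesis .
qed

lemma objective_eq_if_is_Qq:
  fixes p :: "'a::finite \<Rightarrow> real"
  assumes p_pos: "\<forall>x. p x > 0"
    and q: "\<forall>xh. q xh > 0" and Qm: "is_Qq f df d p s1 s2 q (Qm q)"
  shows "objective f df d p s1 s2 Qm q
    = cross_info p (Qm q) q + s1 * exp_dist p (Qm q) d + s2 * f_div f p (out_marg p (Qm q))"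
proof -
  define r where "r = out_marg p (Qm q)"
  define A where "A = Afun f df d p s1 s2 r"
  have r: "\<forall>xh. r xh > 0"
    unfolding r_def using p_pos is_Qq_pos[OF q Qm] by (simp add: out_marg_pos)
  have qA: "\<forall>xh. q xh * A x xh > 0" for x
    using q by (simp add: A_def Afun_def)
  have Q_eq: "Qm q x xh = q xh * A x xh / (\<Sum>i\<in>UNIV. q i * A x i)" for x xh
    using Qm by (simp add: is_Qq_def A_def r_def)
  have "objective f df d p s1 s2 Qm q
      = s2 * (\<Sum>xh\<in>UNIV. p xh * df (p xh / r xh)) + (\<Sum>x\<in>UNIV. p x * - ln (\<Sum>xh\<in>UNIV. q xh * A x xh))"
    by (simp add: objective_def r_def A_def sum_negf)
  also have "\<dots> = s2 * (\<Sum>xh\<in>UNIV. p xh * df (p xh / r xh))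
      + (\<Sum>x\<in>UNIV. p x * (\<Sum>xh\<in>UNIV. Qm q x xh * ln (Qm q x xh / (q xh * A x xh))))"
    unfolding Q_eq gibbs_equality[OF qA] ..
  also have "\<dots> = cross_info p (Qm q) q + s1 * exp_dist p (Qm q) d
      + s2 * ((\<Sum>xh\<in>UNIV. p xh * df (p xh / r xh)) + (\<Sum>xh\<in>UNIV. r xh * gfun f df p r xh))"
    using is_Qq_pos[OF q Qm] q
    by (simp add: A_def r_def expected_ln_div_tilted less_imp_le algebra_simps)
  also have "\<dots> = cross_info p (Qm q) q + s1 * exp_dist p (Qm q) d + s2 * f_div f p r"
    by (simp add: sum_df_add_gfun_eq_f_div[OF r])
  finally show ?thesis
    by (simp add: r_def)
qed

lemma objective_min_le_mutual_info:
  fixes p :: "'a::finite \<Rightarrow> real"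
  assumes p_prob: "prob_vec p" and p_pos: "\<forall>x. p x > 0"
    and df_subgrad: "\<forall>t>0. \<forall>u>0. f u \<ge> f t + df t * (u - t)"
    and s2: "s2 \<ge> 0"
    and Qm_fix: "\<forall>q. prob_vec q \<and> (\<forall>xh. q xh > 0) \<longrightarrow> is_Qq f df d p s1 s2 q (Qm q)"
    and qs_min: "\<forall>q. prob_vec q \<and> (\<forall>xh. q xh > 0) \<longrightarrow>
                   objective f df d p s1 s2 Qm qs \<le> objective f df d p s1 s2 Qm q"
    and W: "channel W" "\<forall>xh. out_marg p W xh > 0"
  shows "objective f df d p s1 s2 Qm qs
    \<le> mutual_info p W + s1 * exp_dist p W d + s2 * f_div f p (out_marg p W)"
proof -
  have rW: "prob_vec (out_marg p W)"
    using prob_vec_out_marg[OF p_prob W(1)] .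
  then have "objective f df d p s1 s2 Qm qs \<le> objective f df d p s1 s2 Qm (out_marg p W)"
    using qs_min W(2) by blast
  also have "\<dots> \<le> mutual_info p W + s1 * exp_dist p W d + s2 * f_div f p (out_marg p W)"
    using objective_le[OF p_pos df_subgrad s2 W(2) _ W] Qm_fix rW W(2)
    by (simp add: cross_info_out_marg)
  finally show ?thesis .
qed

lemma mutual_info_le_cross_info:
  assumes "prob_vec p" "channel Q" "\<forall>xh. out_marg p Q xh > 0"
    and "prob_vec q" "\<forall>xh. q xh > 0"
  shows "mutual_info p Q \<le> cross_info p Q q"
proof -
  let ?r = "out_marg p Q"
  have "p x * Q x xh * ln (Q x xh / q xh) = p x * Q x xh * ln (Q x xh / ?r xh) + p x * Q x xh * ln (?r xh / q xh)"
    for x xh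
  proof (cases "Q x xh = 0")
    case False
    with assms(2,3,5) have "Q x xh > 0" "?r xh > 0" "q xh > 0"
      by (auto simp: channel_def less_le)
    then show ?thesis
      by (simp add: ln_div algebra_simps)
  qed simp
  then have "cross_info p Q q = mutual_info p Q + (\<Sum>xh\<in>UNIV. ?r xh * ln (?r xh / q xh))"
    by (simp add: cross_info_def mutual_info_def sum.distrib sum_out_marg_mult)
  moreover have "- ln (\<Sum>xh\<in>UNIV. q xh) \<le> (\<Sum>xh\<in>UNIV. ?r xh * ln (?r xh / q xh))"
    using prob_vec_out_marg[OF assms(1,2)] assms(5)
    by (intro gibbs_inequality) (auto simp: prob_vec_def)
  ultimately show ?thesis
    using assms(4) by (simp add: prob_vec_def)
qed

theorem corollary1:
  fixes p :: "'a::finite \<Rightarrow> real"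
    and d :: "'a \<Rightarrow> 'a \<Rightarrow> real"
    and f df :: "real \<Rightarrow> real"
    and s1 s2 :: real
    and Qm :: "('a \<Rightarrow> real) \<Rightarrow> ('a \<Rightarrow> 'a \<Rightarrow> real)"
    and qs :: "'a \<Rightarrow> real"
  assumes p_prob: "prob_vec p" and p_pos: "\<forall>x. p x > 0"
    and d_nonneg: "\<forall>x xh. d x xh \<ge> 0"
    and f_convex: "convex_on {0<..} f" and f_one: "f 1 = 0"
    and df_subgrad: "\<forall>t>0. \<forall>u>0. f u \<ge> f t + df t * (u - t)"
    and s1: "s1 \<ge> 0" and s2: "s2 \<ge> 0"
    and Qm_fix: "\<forall>q. prob_vec q \<and> (\<forall>xh. q xh > 0) \<longrightarrow> is_Qq f df d p s1 s2 q (Qm q)"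
    and qs_dom: "prob_vec qs" "\<forall>xh. qs xh > 0"
    and qs_min: "\<forall>q. prob_vec q \<and> (\<forall>xh. q xh > 0) \<longrightarrow>
                   objective f df d p s1 s2 Qm qs \<le> objective f df d p s1 s2 Qm q"
  shows "let r = out_marg p (Qm qs);
             Ds = (\<Sum>x\<in>UNIV. \<Sum>xh\<in>UNIV. p x *
                     (qs xh * Afun f df d p s1 s2 r x xh
                       / (\<Sum>i\<in>UNIV. qs i * Afun f df d p s1 s2 r x i)) * d x xh);
             Ps = f_div f p r
         in rdp f p d Ds Ps = - s1 * Ds - s2 * Ps + objective f df d p s1 s2 Qm qs"
proof -
  define Q where "Q = Qm qs"
  define Ds where "Ds = exp_dist p Q d"
  define Ps where "Ps = f_div f p (out_marg p Q)"
  define L where "L = - s1 * Ds - s2 * Ps + objective f df d p s1 s2 Qm qs"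
  have Qm_qs: "is_Qq f df d p s1 s2 qs Q"
    using Qm_fix qs_dom by (simp add: Q_def)
  have Q: "channel Q" "\<forall>xh. out_marg p Q xh > 0"
    using is_Qq_channel[OF qs_dom(2) Qm_qs] is_Qq_pos[OF qs_dom(2) Qm_qs] p_pos
    by (auto intro: out_marg_pos)
  have lower: "L \<le> mutual_info p W"
    if W: "channel W" "\<forall>xh. out_marg p W xh > 0" "exp_dist p W d \<le> Ds" "f_div f p (out_marg p W) \<le> Ps"
    for W
  proof -
    have "objective f df d p s1 s2 Qm qs
        \<le> mutual_info p W + s1 * exp_dist p W d + s2 * f_div f p (out_marg p W)"
      using objective_min_le_mutual_info[OF p_prob p_pos df_subgrad s2 Qm_fix qs_min W(1,2)] .
    also have "\<dots> \<le> mutual_info p W + s1 * Ds + s2 * Ps"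
      using W(3,4) s1 s2 by (intro add_mono mult_left_mono) auto
    finally show ?thesis
      by (simp add: L_def)
  qed
  have feasible: "exp_dist p Q d \<le> Ds" "f_div f p (out_marg p Q) \<le> Ps"
    by (simp_all add: Ds_def Ps_def)
  have "mutual_info p Q \<le> L"
    using mutual_info_le_cross_info[OF p_prob Q qs_dom] objective_eq_if_is_Qq[OF p_pos qs_dom(2)] Qm_qs
    by (simp add: L_def Ds_def Ps_def Q_def)
  with lower[OF Q feasible] have "mutual_info p Q = L"
    by simp
  then have "rdp f p d Ds Ps = L"
    unfolding rdp_def using Q feasible by (intro cInf_eq_minimum) (blast, auto dest: lower)
  then show ?thesis
    using exp_dist_is_Qq[OF Qm_qs] by (simp add: Let_def Ds_def Ps_def L_def Q_def)
qed

end
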